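(* Let $\mathcal{G}\subseteq C(\mathbb{R},\mathbb{R})$ be nonempty. The following conditions are equivalent: (1) $\{\mathrm{CL}(E):E\in\mathrm{CL}(\mathbb{R})\}\subseteq\mathcal{K}_\mathcal{G}$; (2) the least element of $(\mathcal{K}_\mathcal{G},\subseteq)$ is $\{\emptyset\}$; (3) for each $x\in\mathbb{R}$, $\mathcal{G}[x]\neq\mathbb{R}$.
   Context: For a closed set $E\subseteq\mathbb{R}$, $\mathrm{CL}(E)$ denotes the family of all closed subsets of $E$; $C(\mathbb{R},\mathbb{R})$ is the set of continuous functions $\mathbb{R}\to\mathbb{R}$. For $\mathcal{G}\subseteq C(\mathbb{R},\mathbb{R})$ and $x\in\mathbb{R}$, $\mathcal{G}[x]=\{g(x):g\in\mathcal{G}\}$. Let $R_\mathcal{G}=\{(f,E)\in C(\mathbb{R},\mathbb{R})\times\mathrm{CL}(\mathbb{R}):(\exists g\in\mathcal{G})\, f\restriction E=g\restriction E\}$; for $\mathcal{F}\subseteq C(\mathbb{R},\mathbb{R})$ put $E_\mathcal{G}(\mathcal{F})=\{E\in\mathrm{CL}(\mathbb{R}):(\forall f\in\mathcal{F})\,(f,E)\in R_\mathcal{G}\}$, and let $\mathcal{K}_\mathcal{G}=\{E_\mathcal{G}(\mathcal{F}):\mathcal{F}\subseteq C(\mathbb{R},\mathbb{R})\}$, ordered by inclusion (a complete lattice). *)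

theory Defs
  imports "HOL-Analysis.Analysis"
begin

definition Ccont :: "(real \<Rightarrow> real) set" where
  "Ccont = {f. continuous_on UNIV f}"

definition CL :: "real set \<Rightarrow> real set set" where
  "CL E = {F. closed F \<and> F \<subseteq> E}"

definition R_rel :: "(real \<Rightarrow> real) set \<Rightarrow> ((real \<Rightarrow> real) \<times> real set) set" where
  "R_rel G = {(f, E). f \<in> Ccont \<and> E \<in> CL UNIV \<and> (\<exists>g\<in>G. \<forall>x\<in>E. f x = g x)}"

definition E_G :: "(real \<Rightarrow> real) set \<Rightarrow> (real \<Rightarrow> real) set \<Rightarrow> real set set" where
  "E_G G F = {E \<in> CL UNIV. \<forall>f\<in>F. (f, E) \<in> R_rel G}"

definition K_G :: "(real \<Rightarrow> real) set \<Rightarrow> real set set set" where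
  "K_G G = {E_G G F | F. F \<subseteq> Ccont}"

definition is_least_in :: "'a set set \<Rightarrow> 'a set \<Rightarrow> bool" where
  "is_least_in K A \<longleftrightarrow> A \<in> K \<and> (\<forall>B\<in>K. A \<subseteq> B)"

end

theory Submission
  imports Defs
begin

text \<open>
  Fix g0 \<in> G and let F consist of the continuous functions agreeing with g0 on a closed set E;
  every closed subset of E lies in E_G G F. If G[x] \<noteq> \<real> for all x, then for x \<notin> E Urysohn's
  lemma yields an f \<in> F whose value at x is missed by G, so no closed set containing x lies in
  E_G G F. Hence E_G G F = CL E, and in particular {{}} = CL {} \<in> K_G G. Conversely, if
  G[x] = \<real> then every f agrees with some g \<in> G on {x}, so {x} lies in every member of K_G G.
\<close>

lemma mem_E_G_iff:
  "D \<in> E_G G F \<longleftrightarrow> closed D \<and> (\<forall>f\<in>F. f \<in> Ccont \<and> (\<exists>g\<in>G. \<forall>x\<in>D. f x = g x))"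
  unfolding E_G_def R_rel_def CL_def by auto

lemma CL_empty: "CL {} = {{}}"
  unfolding CL_def by auto

lemma empty_in_E_G:
  assumes "G \<noteq> {}" "F \<subseteq> Ccont"
  shows "{} \<in> E_G G F"
  using assms by (auto simp: mem_E_G_iff)

lemma singleton_in_E_G:
  assumes "(\<lambda>g. g x) ` G = UNIV" "F \<subseteq> Ccont"
  shows "{x} \<in> E_G G F"
proof -
  have "\<exists>g\<in>G. f x = g x" for f :: "real \<Rightarrow> real"
    using assms(1) by (metis UNIV_I imageE)
  then show ?thesis
    using assms(2) by (auto simp: mem_E_G_iff)
qed

lemma is_least_in_K_G_empty_iff:
  assumes "G \<noteq> {}"
  shows "is_least_in (K_G G) {{}} \<longleftrightarrow> {{}} \<in> K_G G"
  using empty_in_E_G[OF assms] unfolding is_least_in_def K_G_def by blast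

lemma continuous_modify_at_point:
  fixes g :: "'a::euclidean_space \<Rightarrow> 'b::euclidean_space"
  assumes "continuous_on UNIV g" "closed E" "x \<notin> E"
  obtains f where "continuous_on UNIV f" "f x = v" "\<And>y. y \<in> E \<Longrightarrow> f y = g y"
proof -
  obtain h :: "'a \<Rightarrow> 'b" where h: "continuous_on UNIV h"
    "\<And>y. y \<in> E \<Longrightarrow> h y = 0" "h x = v - g x"
    by (rule Urysohn[OF assms(2) closed_singleton, of x 0 "v - g x"]) (use assms(3) in auto)
  show ?thesis
  proof
    show "continuous_on UNIV (\<lambda>y. g y + h y)"
      using assms(1) h(1) by (rule continuous_on_add)
  qed (use h in auto)
qed

lemma E_G_agreeing_eq_CL:
  assumes g0: "g0 \<in> G" "g0 \<in> Ccont"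
    and missed: "\<forall>x. (\<lambda>g. g x) ` G \<noteq> UNIV" and "closed E"
  shows "E_G G {f \<in> Ccont. \<forall>y\<in>E. f y = g0 y} = CL E"
proof
  show "CL E \<subseteq> E_G G {f \<in> Ccont. \<forall>y\<in>E. f y = g0 y}"
  proof
    fix D assume "D \<in> CL E"
    then have "closed D" "D \<subseteq> E"
      unfolding CL_def by auto
    then show "D \<in> E_G G {f \<in> Ccont. \<forall>y\<in>E. f y = g0 y}"
      using g0(1) unfolding mem_E_G_iff by blast
  qed
next
  show "E_G G {f \<in> Ccont. \<forall>y\<in>E. f y = g0 y} \<subseteq> CL E"
  proof
    fix D assume D: "D \<in> E_G G {f \<in> Ccont. \<forall>y\<in>E. f y = g0 y}"
    have "x \<in> E" if "x \<in> D" for x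
    proof (rule ccontr)
      assume "x \<notin> E"
      obtain v where v: "v \<notin> (\<lambda>g. g x) ` G"
        using missed by blast
      obtain f where f: "continuous_on UNIV f" "f x = v" "\<And>y. y \<in> E \<Longrightarrow> f y = g0 y"
        using continuous_modify_at_point g0(2) \<open>closed E\<close> \<open>x \<notin> E\<close>
        unfolding Ccont_def by blast
      then obtain g where "g \<in> G" "f x = g x"
        using D \<open>x \<in> D\<close> by (fastforce simp: mem_E_G_iff Ccont_def)
      then show False
        using v f(2) by blast
    qed
    then show "D \<in> CL E"
      using D by (auto simp: CL_def mem_E_G_iff)
  qed
qed

lemma CL_in_K_G:
  assumes "G \<subseteq> Ccont" "G \<noteq> {}" "\<forall>x. (\<lambda>g. g x) ` G \<noteq> UNIV" "closed E"
  shows "CL E \<in> K_G G"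
proof -
  obtain g0 where "g0 \<in> G"
    using assms(2) by blast
  then have "E_G G {f \<in> Ccont. \<forall>y\<in>E. f y = g0 y} = CL E"
    using assms E_G_agreeing_eq_CL by blast
  then show ?thesis
    unfolding K_G_def by blast
qed

theorem theorem3p2:
  fixes G :: "(real \<Rightarrow> real) set"
  assumes "G \<subseteq> Ccont" and "G \<noteq> {}"
  shows "({CL E | E. E \<in> CL UNIV} \<subseteq> K_G G \<longleftrightarrow> is_least_in (K_G G) {{}})
       \<and> (is_least_in (K_G G) {{}} \<longleftrightarrow> (\<forall>x::real. (\<lambda>g. g x) ` G \<noteq> UNIV))"
proof -
  have all_CL_imp_least: "is_least_in (K_G G) {{}}" if "{CL E | E. E \<in> CL UNIV} \<subseteq> K_G G"
  proof -
    have "{} \<in> CL UNIV"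
      by (simp add: CL_def)
    then have "{{}} \<in> K_G G"
      using that CL_empty by blast
    then show ?thesis
      using is_least_in_K_G_empty_iff[OF assms(2)] by blast
  qed
  have least_imp_missed: "\<forall>x. (\<lambda>g. g x) ` G \<noteq> UNIV" if "is_least_in (K_G G) {{}}"
  proof (intro allI notI)
    fix x assume "(\<lambda>g. g x) ` G = UNIV"
    have "{{}} \<in> K_G G"
      using that unfolding is_least_in_def by simp
    then obtain F where "F \<subseteq> Ccont" "{{}} = E_G G F"
      unfolding K_G_def by auto
    then show False
      using singleton_in_E_G[OF \<open>(\<lambda>g. g x) ` G = UNIV\<close>] by blast
  qed
  have missed_imp_all_CL: "{CL E | E. E \<in> CL UNIV} \<subseteq> K_G G" if "\<forall>x. (\<lambda>g. g x) ` G \<noteq> UNIV"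
    using CL_in_K_G[OF assms that] by (auto simp: CL_def)
  show ?thesis
    using all_CL_imp_least least_imp_missed missed_imp_all_CL by blast
qed

end
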